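(* Consider the following stochastic system on a time horizon $\{0,\dots,T\}$. The plant evolves as $x^{t+1}=F_t(x^t,v^t)$ with $F_t:\mathbb{R}^n\times\mathbb{R}^m\to\mathbb{R}^n$, where $v^t=b^tu^t$, $u^t\in\mathbb{R}^m$ is the controller's action and $b^t\in\{0,1\}$ is the transmission state of the link. The link regime $s^t$ takes values in the finite set $\mathcal{F}=\{1,\dots,|\mathcal{F}|\}$; at each time $t$ the jammer takes an action $a^t\in\mathcal{A}=\{1,\dots,N\}$, which selects a row-stochastic matrix $P^t(a^t)\in\mathbb{R}^{|\mathcal{F}|\times|\mathcal{F}|}$, and the new regime is drawn according to $\mathrm{Pr}(s^{t+1}=i\mid s^t=j,a^t=a)=P^t_{ji}(a)$ (conditionally on $s^t,a^t$, independently of the rest of the past). Given $s^{t+1}$, the variable $b^t$ is conditionally independent of all previous regimes, of the current and past plant states and of the current and past actions of both players, with $\mathrm{Pr}(b^t=1\mid s^{t+1}=j)=q^t_j\in[0,1]$. Then, given a sequence of controller's and jammer's actions, the joint state-link process $\{(x^t,s^t)\}_{t=0}^T$ is a Markov process: for every $t=0,\dots,T-1$ and all Borel sets $\Lambda\subseteq\mathbb{R}^n$, $S\subseteq\mathcal{F}$, \[ \mathrm{Pr}\big(x^{t+1}\in\Lambda,s^{t+1}\in S\,\big|\,\{(x^\theta,s^\theta),u^\theta,a^\theta\}_{\theta=0}^t\big)=\mathrm{Pr}\big(x^{t+1}\in\Lambda,s^{t+1}\in S\,\big|\,x^t,s^t,u^t,a^t\big). \]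
   Context: The initial plant state $x^0$ and the initial regime $s^0$ are given (deterministic). $P^t_{ji}(a)$ denotes the $(j,i)$ entry of $P^t(a)$. *)

theory Defs
  imports "HOL-Probability.Probability"
begin

definition cprob :: "'w measure \<Rightarrow> 'w set \<Rightarrow> 'w set \<Rightarrow> real" where
  "cprob M A B = measure M (A \<inter> B) / measure M B"

end

theory Submission
  imports Defs
begin

text \<open>Given the state \<open>(y, j)\<close> at time \<open>t\<close>, the next regime is \<open>i\<close> with probability
  \<open>P t (a t) j i\<close>; given \<open>i\<close>, the link is on with probability \<open>q t i\<close>, and the plant moves to
  \<open>F t y (u t)\<close> if it is on and to \<open>F t y 0\<close> otherwise. So conditioned on a whole history, the
  event \<open>x (Suc t) \<in> \<Lambda>, s (Suc t) \<in> S\<close> has a probability (\<open>transition_prob\<close>) that depends only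
  on the last state of the history. The event that the current state is \<open>(y, j)\<close> is the disjoint
  union of the finitely many history events ending in \<open>(y, j)\<close> -- the plant reaches only
  finitely many states, since the control enters only through \<open>b t \<in> {0, 1}\<close> -- so conditioning
  on the current state alone yields the same probability.\<close>

primrec reachable_states ::
  "(nat \<Rightarrow> real^'n \<Rightarrow> real^'m \<Rightarrow> real^'n) \<Rightarrow> (nat \<Rightarrow> real^'m) \<Rightarrow> real^'n \<Rightarrow> nat \<Rightarrow> (real^'n) set"
where
  "reachable_states F u x0 0 = {x0}"
| "reachable_states F u x0 (Suc t) =
     (\<lambda>y. F t y 0) ` reachable_states F u x0 t \<union> (\<lambda>y. F t y (u t)) ` reachable_states F u x0 t"

lemma finite_reachable_states: "finite (reachable_states F u x0 t)"
  by (induction t) auto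

lemma restrict_eq_iff:
  assumes "g \<in> extensional A"
  shows "restrict f A = g \<longleftrightarrow> (\<forall>x\<in>A. f x = g x)"
  using assms by (auto intro: extensionalityI[OF restrict_extensional])

lemma (in finite_measure) measure_subset_null:
  assumes "A \<subseteq> B" "B \<in> sets M" "measure M B = 0"
  shows "measure M A = 0"
  using finite_measure_mono[OF assms(1,2)] assms(3) measure_nonneg[of M A] by linarith

lemma (in finite_measure) measure_eq_sum_fibres:
  assumes "finite V" "A \<in> sets M" "\<And>\<omega>. \<omega> \<in> A \<Longrightarrow> h \<omega> \<in> V"
    and "\<And>v. v \<in> V \<Longrightarrow> {\<omega>\<in>space M. h \<omega> = v} \<in> sets M"
  shows "measure M A = (\<Sum>v\<in>V. measure M (A \<inter> {\<omega>\<in>space M. h \<omega> = v}))"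
proof -
  have "A = (\<Union>v\<in>V. A \<inter> {\<omega>\<in>space M. h \<omega> = v})"
    using assms(3) sets.sets_into_space[OF assms(2)] by auto
  then have "measure M A = measure M (\<Union>v\<in>V. A \<inter> {\<omega>\<in>space M. h \<omega> = v})"
    by simp
  also have "\<dots> = (\<Sum>v\<in>V. measure M (A \<inter> {\<omega>\<in>space M. h \<omega> = v}))"
    using assms by (intro finite_measure_finite_Union) (auto simp: disjoint_family_on_def)
  finally show ?thesis .
qed

text \<open>Only the hypotheses of the theorem that the argument needs: stochasticity of \<open>P\<close> and
  \<open>q t i \<in> [0, 1]\<close> are consistency conditions, and \<open>\<Lambda>\<close> need not be Borel because every \<open>x t\<close>
  takes finitely many values.\<close>

locale jammed_control_system = prob_space M
  for M :: "'w measure" and T K :: nat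
    and F :: "nat \<Rightarrow> real^'n \<Rightarrow> real^'m \<Rightarrow> real^'n" and u :: "nat \<Rightarrow> real^'m" and x0 :: "real^'n"
    and P :: "nat \<Rightarrow> nat \<Rightarrow> nat \<Rightarrow> nat \<Rightarrow> real" and q :: "nat \<Rightarrow> nat \<Rightarrow> real" and a :: "nat \<Rightarrow> nat"
    and x :: "nat \<Rightarrow> 'w \<Rightarrow> real^'n" and s b :: "nat \<Rightarrow> 'w \<Rightarrow> nat" +
  assumes s_meas: "\<And>t. s t \<in> measurable M (count_space UNIV)"
    and b_meas: "\<And>t. b t \<in> measurable M (count_space UNIV)"
    and s_range: "\<And>t \<omega>. t \<le> T \<Longrightarrow> \<omega> \<in> space M \<Longrightarrow> s t \<omega> \<in> {1..K}"
    and b_range: "\<And>t \<omega>. t < T \<Longrightarrow> \<omega> \<in> space M \<Longrightarrow> b t \<omega> \<in> {0, 1}"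
    and x_init: "\<And>\<omega>. \<omega> \<in> space M \<Longrightarrow> x 0 \<omega> = x0"
    and plant: "\<And>t \<omega>. t < T \<Longrightarrow> \<omega> \<in> space M \<Longrightarrow>
                  x (Suc t) \<omega> = F t (x t \<omega>) (real (b t \<omega>) *\<^sub>R u t)"
    and regime_trans: "\<And>t \<xi> \<sigma> i. t < T \<Longrightarrow>
          measure M {\<omega>\<in>space M. \<forall>\<theta>\<le>t. x \<theta> \<omega> = \<xi> \<theta> \<and> s \<theta> \<omega> = \<sigma> \<theta>} > 0 \<Longrightarrow>
          cprob M {\<omega>\<in>space M. s (Suc t) \<omega> = i}
                  {\<omega>\<in>space M. \<forall>\<theta>\<le>t. x \<theta> \<omega> = \<xi> \<theta> \<and> s \<theta> \<omega> = \<sigma> \<theta>}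
            = P t (a t) (\<sigma> t) i"
    and link_trans: "\<And>t \<xi> \<sigma>. t < T \<Longrightarrow>
          measure M {\<omega>\<in>space M. (\<forall>\<theta>\<le>t. x \<theta> \<omega> = \<xi> \<theta>) \<and> (\<forall>\<theta>\<le>Suc t. s \<theta> \<omega> = \<sigma> \<theta>)} > 0 \<Longrightarrow>
          cprob M {\<omega>\<in>space M. b t \<omega> = 1}
                  {\<omega>\<in>space M. (\<forall>\<theta>\<le>t. x \<theta> \<omega> = \<xi> \<theta>) \<and> (\<forall>\<theta>\<le>Suc t. s \<theta> \<omega> = \<sigma> \<theta>)}
            = q t (\<sigma> (Suc t))"
begin

definition history :: "nat \<Rightarrow> (nat \<Rightarrow> real^'n) \<Rightarrow> (nat \<Rightarrow> nat) \<Rightarrow> 'w set" where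
  "history t \<xi> \<sigma> = {\<omega>\<in>space M. \<forall>\<theta>\<le>t. x \<theta> \<omega> = \<xi> \<theta> \<and> s \<theta> \<omega> = \<sigma> \<theta>}"

definition regime_history :: "nat \<Rightarrow> (nat \<Rightarrow> real^'n) \<Rightarrow> (nat \<Rightarrow> nat) \<Rightarrow> nat \<Rightarrow> 'w set" where
  "regime_history t \<xi> \<sigma> i = history t \<xi> \<sigma> \<inter> {\<omega>\<in>space M. s (Suc t) \<omega> = i}"

definition link_history :: "nat \<Rightarrow> (nat \<Rightarrow> real^'n) \<Rightarrow> (nat \<Rightarrow> nat) \<Rightarrow> nat \<Rightarrow> nat \<Rightarrow> 'w set" where
  "link_history t \<xi> \<sigma> i v = regime_history t \<xi> \<sigma> i \<inter> {\<omega>\<in>space M. b t \<omega> = v}"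

definition current_state :: "nat \<Rightarrow> real^'n \<Rightarrow> nat \<Rightarrow> 'w set" where
  "current_state t y j = {\<omega>\<in>space M. x t \<omega> = y \<and> s t \<omega> = j}"

definition next_event :: "nat \<Rightarrow> (real^'n) set \<Rightarrow> nat set \<Rightarrow> 'w set" where
  "next_event t \<Lambda> S = {\<omega>\<in>space M. x (Suc t) \<omega> \<in> \<Lambda> \<and> s (Suc t) \<omega> \<in> S}"

definition transition_prob :: "nat \<Rightarrow> real^'n \<Rightarrow> nat \<Rightarrow> (real^'n) set \<Rightarrow> nat set \<Rightarrow> real" where
  "transition_prob t y j \<Lambda> S =
     (\<Sum>i\<in>S. P t (a t) j i * (q t i * indicator \<Lambda> (F t y (u t)) + (1 - q t i) * indicator \<Lambda> (F t y 0)))"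

lemma sets_s_eq: "{\<omega>\<in>space M. s t \<omega> = i} \<in> sets M"
  using s_meas by measurable

lemma sets_b_eq: "{\<omega>\<in>space M. b t \<omega> = v} \<in> sets M"
  using b_meas by measurable

lemma sets_x_preimage: "\<theta> \<le> T \<Longrightarrow> {\<omega>\<in>space M. x \<theta> \<omega> \<in> A} \<in> sets M"
proof (induction \<theta> arbitrary: A)
  case 0
  have "{\<omega>\<in>space M. x 0 \<omega> \<in> A} = (if x0 \<in> A then space M else {})"
    using x_init by auto
  then show ?case by simp
next
  case (Suc t)
  then have "t < T" by simp
  then have "{\<omega>\<in>space M. x (Suc t) \<omega> \<in> A} =
      (\<Union>v\<in>{0, 1}. {\<omega>\<in>space M. b t \<omega> = v} \<inter> {\<omega>\<in>space M. x t \<omega> \<in> {y. F t y (real v *\<^sub>R u t) \<in> A}})"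
    using b_range plant by fastforce
  also have "\<dots> \<in> sets M"
    using Suc by (intro sets.finite_UN sets.Int sets_b_eq Suc.IH) auto
  finally show ?case .
qed

lemma x_in_reachable_states: "\<theta> \<le> T \<Longrightarrow> \<omega> \<in> space M \<Longrightarrow> x \<theta> \<omega> \<in> reachable_states F u x0 \<theta>"
proof (induction \<theta>)
  case 0
  then show ?case using x_init by simp
next
  case (Suc t)
  then have "b t \<omega> = 0 \<or> b t \<omega> = 1" using b_range by auto
  then show ?case using Suc plant by auto
qed

lemma sets_history: "t \<le> T \<Longrightarrow> history t \<xi> \<sigma> \<in> sets M"
proof -
  assume "t \<le> T"
  have "{\<omega>\<in>space M. x \<theta> \<omega> = \<xi> \<theta> \<and> s \<theta> \<omega> = \<sigma> \<theta>} \<in> sets M" if "\<theta> \<le> T" for \<theta>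
  proof -
    have "{\<omega>\<in>space M. x \<theta> \<omega> = \<xi> \<theta> \<and> s \<theta> \<omega> = \<sigma> \<theta>} =
        {\<omega>\<in>space M. x \<theta> \<omega> \<in> {\<xi> \<theta>}} \<inter> {\<omega>\<in>space M. s \<theta> \<omega> = \<sigma> \<theta>}"
      by auto
    also have "\<dots> \<in> sets M"
      by (rule sets.Int[OF sets_x_preimage[OF that] sets_s_eq])
    finally show ?thesis .
  qed
  moreover have "history t \<xi> \<sigma> =
      {\<omega>\<in>space M. \<forall>\<theta>\<in>{..t}. x \<theta> \<omega> = \<xi> \<theta> \<and> s \<theta> \<omega> = \<sigma> \<theta>}"
    by (auto simp: history_def)
  ultimately show ?thesis
    using \<open>t \<le> T\<close> by (auto intro!: sets.sets_Collect_finite_All)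
qed

lemma sets_regime_history: "t \<le> T \<Longrightarrow> regime_history t \<xi> \<sigma> i \<in> sets M"
  by (simp add: regime_history_def sets.Int sets_history sets_s_eq)

lemma sets_current_state: "t \<le> T \<Longrightarrow> current_state t y j \<in> sets M"
proof -
  assume "t \<le> T"
  have "current_state t y j = {\<omega>\<in>space M. x t \<omega> \<in> {y}} \<inter> {\<omega>\<in>space M. s t \<omega> = j}"
    by (auto simp: current_state_def)
  also have "\<dots> \<in> sets M"
    by (rule sets.Int[OF sets_x_preimage[OF \<open>t \<le> T\<close>] sets_s_eq])
  finally show ?thesis .
qed

lemma sets_next_event: "t < T \<Longrightarrow> next_event t \<Lambda> S \<in> sets M"
proof -
  assume "t < T"
  have "next_event t \<Lambda> S = {\<omega>\<in>space M. x (Suc t) \<omega> \<in> \<Lambda>} \<inter> {\<omega>\<in>space M. s (Suc t) \<omega> \<in> S}"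
    by (auto simp: next_event_def)
  also have "\<dots> \<in> sets M"
    using \<open>t < T\<close> s_meas by (intro sets.Int sets_x_preimage) measurable
  finally show ?thesis .
qed

lemma measure_regime_history:
  assumes "t < T"
  shows "measure M (regime_history t \<xi> \<sigma> i) = P t (a t) (\<sigma> t) i * measure M (history t \<xi> \<sigma>)"
proof (cases "measure M (history t \<xi> \<sigma>) = 0")
  case True
  have "regime_history t \<xi> \<sigma> i \<subseteq> history t \<xi> \<sigma>"
    by (simp add: regime_history_def)
  with True show ?thesis
    using assms measure_subset_null sets_history by simp
next
  case False
  then have "measure M (history t \<xi> \<sigma>) > 0"
    using measure_nonneg[of M "history t \<xi> \<sigma>"] by linarith
  then have "cprob M {\<omega>\<in>space M. s (Suc t) \<omega> = i} (history t \<xi> \<sigma>) = P t (a t) (\<sigma> t) i"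
    unfolding history_def by (rule regime_trans[OF assms])
  moreover have "{\<omega>\<in>space M. s (Suc t) \<omega> = i} \<inter> history t \<xi> \<sigma> = regime_history t \<xi> \<sigma> i"
    by (auto simp: regime_history_def)
  ultimately show ?thesis
    using False by (simp add: cprob_def field_simps)
qed

lemma regime_history_eq:
  "regime_history t \<xi> \<sigma> i =
     {\<omega>\<in>space M. (\<forall>\<theta>\<le>t. x \<theta> \<omega> = \<xi> \<theta>) \<and> (\<forall>\<theta>\<le>Suc t. s \<theta> \<omega> = (\<sigma>(Suc t := i)) \<theta>)}"
  by (auto simp: regime_history_def history_def le_Suc_eq)

lemma measure_link_on:
  assumes "t < T"
  shows "measure M (link_history t \<xi> \<sigma> i 1) = q t i * measure M (regime_history t \<xi> \<sigma> i)"
proof (cases "measure M (regime_history t \<xi> \<sigma> i) = 0")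
  case True
  have "link_history t \<xi> \<sigma> i 1 \<subseteq> regime_history t \<xi> \<sigma> i"
    by (simp add: link_history_def)
  with True show ?thesis
    using assms measure_subset_null sets_regime_history by simp
next
  case False
  then have "measure M (regime_history t \<xi> \<sigma> i) > 0"
    using measure_nonneg[of M "regime_history t \<xi> \<sigma> i"] by linarith
  then have "cprob M {\<omega>\<in>space M. b t \<omega> = 1} (regime_history t \<xi> \<sigma> i) = q t i"
    using link_trans[OF assms, of \<xi> "\<sigma>(Suc t := i)"] by (simp add: regime_history_eq)
  moreover have "{\<omega>\<in>space M. b t \<omega> = 1} \<inter> regime_history t \<xi> \<sigma> i = link_history t \<xi> \<sigma> i 1"
    by (auto simp: link_history_def)
  ultimately show ?thesis
    using False by (simp add: cprob_def field_simps)
qed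

lemma measure_link_off:
  assumes "t < T"
  shows "measure M (link_history t \<xi> \<sigma> i 0) = (1 - q t i) * measure M (regime_history t \<xi> \<sigma> i)"
proof -
  have "measure M (regime_history t \<xi> \<sigma> i) =
      (\<Sum>v\<in>{0, 1}. measure M (regime_history t \<xi> \<sigma> i \<inter> {\<omega>\<in>space M. b t \<omega> = v}))"
  proof (rule measure_eq_sum_fibres)
    show "regime_history t \<xi> \<sigma> i \<in> sets M"
      using assms by (simp add: sets_regime_history)
    then show "b t \<omega> \<in> {0, 1}" if "\<omega> \<in> regime_history t \<xi> \<sigma> i" for \<omega>
      using that assms b_range sets.sets_into_space by blast
  qed (simp_all add: sets_b_eq)
  also have "\<dots> = measure M (link_history t \<xi> \<sigma> i 0) + q t i * measure M (regime_history t \<xi> \<sigma> i)"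
    using measure_link_on[OF assms] by (simp add: link_history_def)
  finally show ?thesis by (simp add: algebra_simps)
qed

lemma next_event_inter_link_history:
  assumes "t < T" "i \<in> S"
  shows "next_event t \<Lambda> S \<inter> link_history t \<xi> \<sigma> i v =
    (if F t (\<xi> t) (real v *\<^sub>R u t) \<in> \<Lambda> then link_history t \<xi> \<sigma> i v else {})"
proof -
  have "\<omega> \<in> space M \<and> x (Suc t) \<omega> = F t (\<xi> t) (real v *\<^sub>R u t) \<and> s (Suc t) \<omega> = i"
    if "\<omega> \<in> link_history t \<xi> \<sigma> i v" for \<omega>
  proof -
    from that have "\<omega> \<in> space M" "x t \<omega> = \<xi> t" "b t \<omega> = v" "s (Suc t) \<omega> = i"
      by (auto simp: link_history_def regime_history_def history_def)
    then show ?thesis using plant[OF assms(1)] by simp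
  qed
  then show ?thesis
    using assms(2) by (auto simp: next_event_def)
qed

lemma measure_next_event_history:
  assumes "t < T" "finite S"
  shows "measure M (next_event t \<Lambda> S \<inter> history t \<xi> \<sigma>) =
    transition_prob t (\<xi> t) (\<sigma> t) \<Lambda> S * measure M (history t \<xi> \<sigma>)"
proof -
  let ?E = "next_event t \<Lambda> S" and ?H = "history t \<xi> \<sigma>"
  let ?m = "\<lambda>i v. indicator \<Lambda> (F t (\<xi> t) (real v *\<^sub>R u t)) * measure M (link_history t \<xi> \<sigma> i v)"
  have "measure M (?E \<inter> ?H) =
      (\<Sum>iv\<in>S \<times> {0, 1}. measure M (?E \<inter> ?H \<inter> {\<omega>\<in>space M. (s (Suc t) \<omega>, b t \<omega>) = iv}))"
  proof (rule measure_eq_sum_fibres)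
    show "?E \<inter> ?H \<in> sets M"
      using assms by (simp add: sets.Int sets_next_event sets_history)
    show "(s (Suc t) \<omega>, b t \<omega>) \<in> S \<times> {0, 1}" if "\<omega> \<in> ?E \<inter> ?H" for \<omega>
      using that assms(1) b_range by (auto simp: next_event_def)
    show "{\<omega>\<in>space M. (s (Suc t) \<omega>, b t \<omega>) = iv} \<in> sets M" for iv
    proof -
      have "{\<omega>\<in>space M. (s (Suc t) \<omega>, b t \<omega>) = iv} =
          {\<omega>\<in>space M. s (Suc t) \<omega> = fst iv} \<inter> {\<omega>\<in>space M. b t \<omega> = snd iv}"
        by auto
      then show ?thesis
        using sets.Int[OF sets_s_eq sets_b_eq] by simp
    qed
  qed (simp add: assms)
  also have "\<dots> = (\<Sum>(i, v)\<in>S \<times> {0, 1}. ?m i v)"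
  proof (intro sum.cong refl, clarify)
    fix i v assume "i \<in> S"
    have "?E \<inter> ?H \<inter> {\<omega>\<in>space M. (s (Suc t) \<omega>, b t \<omega>) = (i, v)} = ?E \<inter> link_history t \<xi> \<sigma> i v"
      by (auto simp: link_history_def regime_history_def)
    then show "measure M (?E \<inter> ?H \<inter> {\<omega>\<in>space M. (s (Suc t) \<omega>, b t \<omega>) = (i, v)}) = ?m i v"
      using next_event_inter_link_history[OF assms(1) \<open>i \<in> S\<close>] by simp
  qed
  also have "\<dots> = (\<Sum>i\<in>S. ?m i 0 + ?m i 1)"
    by (simp add: sum.cartesian_product[symmetric] del: sum_indicator_mult)
  also have "\<dots> = (\<Sum>i\<in>S. P t (a t) (\<sigma> t) i * (q t i * indicator \<Lambda> (F t (\<xi> t) (u t))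
      + (1 - q t i) * indicator \<Lambda> (F t (\<xi> t) 0)) * measure M ?H)"
    unfolding measure_link_on[OF assms(1)] measure_link_off[OF assms(1)] measure_regime_history[OF assms(1)]
    by (simp add: algebra_simps)
  finally show ?thesis
    by (simp add: transition_prob_def sum_distrib_right)
qed

lemma current_state_inter_history:
  "current_state t y j \<inter> history t \<xi> \<sigma> = (if \<xi> t = y \<and> \<sigma> t = j then history t \<xi> \<sigma> else {})"
  by (auto simp: current_state_def history_def)

lemma measure_next_event_current_state:
  assumes "t < T" "finite S"
  shows "measure M (next_event t \<Lambda> S \<inter> current_state t y j) =
    transition_prob t y j \<Lambda> S * measure M (current_state t y j)"
proof -
  let ?E = "next_event t \<Lambda> S" and ?C = "current_state t y j" and ?c = "transition_prob t y j \<Lambda> S"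
  define V where "V = (\<Pi>\<^sub>E \<theta>\<in>{..t}. reachable_states F u x0 \<theta>) \<times> (\<Pi>\<^sub>E \<theta>\<in>{..t}. {1..K})"
  define h where "h \<omega> = (restrict (\<lambda>\<theta>. x \<theta> \<omega>) {..t}, restrict (\<lambda>\<theta>. s \<theta> \<omega>) {..t})" for \<omega>
  let ?fibre = "\<lambda>v. {\<omega>\<in>space M. h \<omega> = v}"
  have "finite V"
    by (simp add: V_def finite_PiE finite_reachable_states)
  have h_V: "h \<omega> \<in> V" if "\<omega> \<in> space M" for \<omega>
    using that assms(1) x_in_reachable_states s_range by (auto simp: V_def h_def)
  have fibre_eq: "?fibre v = history t (fst v) (snd v)" if "v \<in> V" for v
  proof -
    have "fst v \<in> extensional {..t}" "snd v \<in> extensional {..t}"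
      using that by (auto simp: V_def PiE_def)
    then show ?thesis
      by (auto simp: h_def history_def prod_eq_iff restrict_eq_iff)
  qed
  have sum_fibres: "measure M A = (\<Sum>v\<in>V. measure M (A \<inter> ?fibre v))" if "A \<in> sets M" for A
  proof (rule measure_eq_sum_fibres[OF \<open>finite V\<close> that])
    show "h \<omega> \<in> V" if "\<omega> \<in> A" for \<omega>
      using h_V sets.sets_into_space[OF \<open>A \<in> sets M\<close>] that by blast
    show "?fibre v \<in> sets M" if "v \<in> V" for v
      using assms(1) fibre_eq[OF that] sets_history by simp
  qed
  have fibre_term: "measure M (?E \<inter> ?C \<inter> ?fibre v) = ?c * measure M (?C \<inter> ?fibre v)" if "v \<in> V" for v
  proof -
    have "?C \<inter> ?fibre v = (if fst v t = y \<and> snd v t = j then history t (fst v) (snd v) else {})"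
      unfolding fibre_eq[OF that] by (rule current_state_inter_history)
    then show ?thesis
      using measure_next_event_history[OF assms] by (simp add: Int_assoc)
  qed
  have "measure M (?E \<inter> ?C) = (\<Sum>v\<in>V. measure M (?E \<inter> ?C \<inter> ?fibre v))"
    using assms(1) by (intro sum_fibres) (simp add: sets.Int sets_next_event sets_current_state)
  also have "\<dots> = (\<Sum>v\<in>V. ?c * measure M (?C \<inter> ?fibre v))"
    using fibre_term by (rule sum.cong[OF refl])
  also have "\<dots> = ?c * measure M ?C"
    using assms(1) by (simp add: sum_distrib_left[symmetric] sum_fibres[symmetric] sets_current_state)
  finally show ?thesis .
qed

lemma cprob_next_event_history_eq_current_state:
  assumes "t < T" "finite S" "measure M (history t \<xi> \<sigma>) > 0"
  shows "cprob M (next_event t \<Lambda> S) (history t \<xi> \<sigma>) =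
    cprob M (next_event t \<Lambda> S) (current_state t (\<xi> t) (\<sigma> t))"
proof -
  have "history t \<xi> \<sigma> \<subseteq> current_state t (\<xi> t) (\<sigma> t)"
    by (auto simp: history_def current_state_def)
  then have "measure M (current_state t (\<xi> t) (\<sigma> t)) > 0"
    using assms(1,3) finite_measure_mono sets_current_state by (meson less_le_trans less_imp_le)
  then show ?thesis
    using assms by (simp add: cprob_def measure_next_event_history measure_next_event_current_state)
qed

end

theorem proposition1:
  fixes M :: "'w measure"
    and T K N :: nat
    and F :: "nat \<Rightarrow> real^'n \<Rightarrow> real^'m \<Rightarrow> real^'n"
    and P :: "nat \<Rightarrow> nat \<Rightarrow> nat \<Rightarrow> nat \<Rightarrow> real"
    and q :: "nat \<Rightarrow> nat \<Rightarrow> real"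
    and u :: "nat \<Rightarrow> real^'m"
    and a :: "nat \<Rightarrow> nat"
    and x :: "nat \<Rightarrow> 'w \<Rightarrow> real^'n"
    and s :: "nat \<Rightarrow> 'w \<Rightarrow> nat"
    and b :: "nat \<Rightarrow> 'w \<Rightarrow> nat"
    and x0 :: "real^'n" and s0 :: nat
  assumes prob: "prob_space M"
    and K_pos: "K \<ge> 1" and N_pos: "N \<ge> 1"
    and a_range: "\<And>t. t < T \<Longrightarrow> a t \<in> {1..N}"
    and P_nonneg: "\<And>t c j i. t < T \<Longrightarrow> c \<in> {1..N} \<Longrightarrow> j \<in> {1..K} \<Longrightarrow> i \<in> {1..K}
                     \<Longrightarrow> 0 \<le> P t c j i"
    and P_rows: "\<And>t c j. t < T \<Longrightarrow> c \<in> {1..N} \<Longrightarrow> j \<in> {1..K}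
                     \<Longrightarrow> (\<Sum>i\<in>{1..K}. P t c j i) = 1"
    and q_range: "\<And>t j. t < T \<Longrightarrow> j \<in> {1..K} \<Longrightarrow> 0 \<le> q t j \<and> q t j \<le> 1"
    and s_meas: "\<And>t. s t \<in> measurable M (count_space UNIV)"
    and b_meas: "\<And>t. b t \<in> measurable M (count_space UNIV)"
    and s_range: "\<And>t \<omega>. t \<le> T \<Longrightarrow> \<omega> \<in> space M \<Longrightarrow> s t \<omega> \<in> {1..K}"
    and b_range: "\<And>t \<omega>. t < T \<Longrightarrow> \<omega> \<in> space M \<Longrightarrow> b t \<omega> \<in> {0, 1}"
    and s0_range: "s0 \<in> {1..K}"
    and x_init: "\<And>\<omega>. \<omega> \<in> space M \<Longrightarrow> x 0 \<omega> = x0"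
    and s_init: "\<And>\<omega>. \<omega> \<in> space M \<Longrightarrow> s 0 \<omega> = s0"
    and plant: "\<And>t \<omega>. t < T \<Longrightarrow> \<omega> \<in> space M \<Longrightarrow>
                  x (Suc t) \<omega> = F t (x t \<omega>) (real (b t \<omega>) *\<^sub>R u t)"
    and regime_trans: "\<And>t \<xi> \<sigma> i. t < T \<Longrightarrow>
          measure M {\<omega>\<in>space M. \<forall>\<theta>\<le>t. x \<theta> \<omega> = \<xi> \<theta> \<and> s \<theta> \<omega> = \<sigma> \<theta>} > 0 \<Longrightarrow>
          cprob M {\<omega>\<in>space M. s (Suc t) \<omega> = i}
                  {\<omega>\<in>space M. \<forall>\<theta>\<le>t. x \<theta> \<omega> = \<xi> \<theta> \<and> s \<theta> \<omega> = \<sigma> \<theta>}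
            = P t (a t) (\<sigma> t) i"
    and link_trans: "\<And>t \<xi> \<sigma>. t < T \<Longrightarrow>
          measure M {\<omega>\<in>space M. (\<forall>\<theta>\<le>t. x \<theta> \<omega> = \<xi> \<theta>) \<and> (\<forall>\<theta>\<le>Suc t. s \<theta> \<omega> = \<sigma> \<theta>)} > 0 \<Longrightarrow>
          cprob M {\<omega>\<in>space M. b t \<omega> = 1}
                  {\<omega>\<in>space M. (\<forall>\<theta>\<le>t. x \<theta> \<omega> = \<xi> \<theta>) \<and> (\<forall>\<theta>\<le>Suc t. s \<theta> \<omega> = \<sigma> \<theta>)}
            = q t (\<sigma> (Suc t))"
  shows "\<forall>t < T. \<forall>\<Lambda> \<in> sets (borel :: (real^'n) measure). \<forall>S \<subseteq> {1..K}. \<forall>\<xi> \<sigma>.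
          measure M {\<omega>\<in>space M. \<forall>\<theta>\<le>t. x \<theta> \<omega> = \<xi> \<theta> \<and> s \<theta> \<omega> = \<sigma> \<theta>} > 0 \<longrightarrow>
          cprob M {\<omega>\<in>space M. x (Suc t) \<omega> \<in> \<Lambda> \<and> s (Suc t) \<omega> \<in> S}
                  {\<omega>\<in>space M. \<forall>\<theta>\<le>t. x \<theta> \<omega> = \<xi> \<theta> \<and> s \<theta> \<omega> = \<sigma> \<theta>}
          = cprob M {\<omega>\<in>space M. x (Suc t) \<omega> \<in> \<Lambda> \<and> s (Suc t) \<omega> \<in> S}
                  {\<omega>\<in>space M. x t \<omega> = \<xi> t \<and> s t \<omega> = \<sigma> t}"
proof -
  interpret jammed_control_system M T K F u x0 P q a x s b
    by (intro jammed_control_system.intro[OF prob] jammed_control_system_axioms.intro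
        s_meas b_meas s_range b_range x_init plant regime_trans link_trans)
  show ?thesis
  proof (intro allI impI ballI)
    fix t \<Lambda> S \<xi> \<sigma>
    assume "t < T" "S \<subseteq> {1..K}"
      and "measure M {\<omega>\<in>space M. \<forall>\<theta>\<le>t. x \<theta> \<omega> = \<xi> \<theta> \<and> s \<theta> \<omega> = \<sigma> \<theta>} > 0"
    moreover have "finite S"
      using \<open>S \<subseteq> {1..K}\<close> finite_subset by blast
    ultimately show "cprob M {\<omega>\<in>space M. x (Suc t) \<omega> \<in> \<Lambda> \<and> s (Suc t) \<omega> \<in> S}
                  {\<omega>\<in>space M. \<forall>\<theta>\<le>t. x \<theta> \<omega> = \<xi> \<theta> \<and> s \<theta> \<omega> = \<sigma> \<theta>}
          = cprob M {\<omega>\<in>space M. x (Suc t) \<omega> \<in> \<Lambda> \<and> s (Suc t) \<omega> \<in> S}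
                  {\<omega>\<in>space M. x t \<omega> = \<xi> t \<and> s t \<omega> = \<sigma> t}"
      using cprob_next_event_history_eq_current_state[of t S \<xi> \<sigma> \<Lambda>]
      unfolding next_event_def history_def current_state_def by blast
  qed
qed

end
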